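(* Let $\mathbf{A} \in \mathbb{R}^{n\times d}$ be a sensing matrix, let $\mathbf{x}^* \in \mathbb{R}^d$ with $K = \|\mathbf{x}^*\|_0$, and let the measurements be $\mathbf{y} = \mathbf{A}\mathbf{x}^* + \boldsymbol{\varepsilon}$ with noise $\boldsymbol{\varepsilon} \in \mathbb{R}^n$. Pick an integer $k \ge K$ and let $\nu = 1 + \frac{\rho + \sqrt{(4+\rho)\rho}}{2}$ with $\rho = \frac{\min\{K, d-k\}}{k - K + \min\{K, d-k\}}$. Consider the iterative hard thresholding (IHT) iterates $$\mathbf{x}^{t} = \mathcal{H}_k\big(\mathbf{x}^{t-1} + \mathbf{A}^\top(\mathbf{y} - \mathbf{A}\mathbf{x}^{t-1})\big), \quad t \ge 1.$$ If the restricted isometry constant satisfies $\delta_{2k+K} \le 1/\sqrt{8\nu}$, then the sequence $(\mathbf{x}^t)$ converges to $\mathbf{x}^*$, up to the energy of the noise, with a geometric rate of $0.5$ (i.e. the error is reduced by a factor $0.5$ per iteration up to an additive term proportional to $\|\boldsymbol{\varepsilon}\|_2$).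
   Context: $\mathcal{H}_k(\mathbf{v})$ keeps the $k$ largest-in-magnitude entries of $\mathbf{v}$ and zeros the rest (ties broken lexicographically). The $r$-th restricted isometry constant $\delta_r$ of $\mathbf{A}$ is the smallest $\delta \ge 0$ such that $(1-\delta)\|\mathbf{x}\|_2^2 \le \|\mathbf{A}\mathbf{x}\|_2^2 \le (1+\delta)\|\mathbf{x}\|_2^2$ for all $r$-sparse $\mathbf{x} \in \mathbb{R}^d$. *)

theory Defs
  imports "HOL-Analysis.Analysis"
begin

definition l0 :: "real ^ 'd \<Rightarrow> nat" where
  "l0 v = card {i. v $ i \<noteq> 0}"

text \<open>Hard thresholding: keep the k largest-in-magnitude entries; ties broken
  lexicographically (smaller index preferred). Entry i is kept iff fewer than k
  indices precede it in this order.\<close>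
definition hard_thr :: "nat \<Rightarrow> real ^ ('d::{finite,linorder}) \<Rightarrow> real ^ ('d::{finite,linorder})" where
  "hard_thr k v = (\<chi> i. if card {j. \<bar>v $ j\<bar> > \<bar>v $ i\<bar> \<or> (\<bar>v $ j\<bar> = \<bar>v $ i\<bar> \<and> j < i)} < k
                          then v $ i else 0)"

definition ric :: "real ^ 'd ^ 'n \<Rightarrow> nat \<Rightarrow> real" where
  "ric A r = Inf {\<delta>. \<delta> \<ge> 0 \<and> (\<forall>x. l0 x \<le> r \<longrightarrow>
        (1 - \<delta>) * (norm x)\<^sup>2 \<le> (norm (A *v x))\<^sup>2 \<and>
        (norm (A *v x))\<^sup>2 \<le> (1 + \<delta>) * (norm x)\<^sup>2)}"

definition iht_rho :: "nat \<Rightarrow> nat \<Rightarrow> nat \<Rightarrow> real" where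
  "iht_rho d k K = real (min K (d - k)) / (real k - real K + real (min K (d - k)))"

definition iht_nu :: "nat \<Rightarrow> nat \<Rightarrow> nat \<Rightarrow> real" where
  "iht_nu d k K = 1 + (iht_rho d k K + sqrt ((4 + iht_rho d k K) * iht_rho d k K)) / 2"

end

theory Submission
  imports Defs
begin

text \<open>
  Let z = x + A^T(y - A x) be the gradient step from an iterate x with at most k nonzero entries,
  S the k indices kept by hard thresholding and T the support of xs. As H_k(z) agrees with z on S,
  the error |H_k(z) - xs|^2 is the error of z on S plus the mass of xs on T - S. Every entry of z
  on T - S is dominated by every entry on S - T, and |T - S| <= rho |S - T|; a weighted Young
  inequality with weight nu - 1, where (nu - 1)^2 = rho nu, therefore gives
  |H_k(z) - xs|^2 <= nu |(z - xs) restricted to Omega|^2 for every Omega containing S and T.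
  For Omega = supp x \<union> T \<union> S, of size at most 2k + K, the restricted isometry property bounds the
  restriction to Omega of z - xs = (I - A^T A)(x - xs) + A^T eps by delta |x - xs| + sqrt (1 + delta) |eps|. Since sqrt nu delta <= 1 / sqrt 8 <= 1/2, one step contracts
  the error by 1/2 up to the noise term, and unrolling the recursion gives the geometric rate.
\<close>

section \<open>Hard thresholding\<close>

text \<open>
  card (outranking z i) is the rank of i when entries are ordered by decreasing magnitude with
  ties broken by index, so hard_thr keeps exactly the indices of rank below k.
\<close>

definition outranking :: "real ^ ('d::{finite,linorder}) \<Rightarrow> 'd \<Rightarrow> 'd set" where
  "outranking z i = {j. \<bar>z $ j\<bar> > \<bar>z $ i\<bar> \<or> (\<bar>z $ j\<bar> = \<bar>z $ i\<bar> \<and> j < i)}"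

definition hard_thr_set :: "nat \<Rightarrow> real ^ ('d::{finite,linorder}) \<Rightarrow> 'd set" where
  "hard_thr_set k z = {i. card (outranking z i) < k}"

lemma hard_thr_nth: "hard_thr k z $ i = (if i \<in> hard_thr_set k z then z $ i else 0)"
  by (simp add: hard_thr_def hard_thr_set_def outranking_def)

lemma outranking_psubset: "j \<in> outranking z i \<Longrightarrow> outranking z j \<subset> outranking z i"
  unfolding outranking_def by auto

lemma card_outranking_less: "j \<in> outranking z i \<Longrightarrow> card (outranking z j) < card (outranking z i)"
  by (simp add: outranking_psubset psubset_card_mono)

lemma inj_card_outranking: "inj (\<lambda>i. card (outranking z i))"
proof (rule injI, rule ccontr)
  fix i j assume eq: "card (outranking z i) = card (outranking z j)" and "i \<noteq> j"
  then have "i \<in> outranking z j \<or> j \<in> outranking z i"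
    unfolding outranking_def by (auto simp: neq_iff)
  then have "card (outranking z i) < card (outranking z j) \<or> card (outranking z j) < card (outranking z i)"
    using card_outranking_less by blast
  with eq show False by simp
qed

lemma range_card_outranking:
  fixes z :: "real ^ ('d::{finite,linorder})"
  shows "range (\<lambda>i. card (outranking z i)) = {..<CARD('d)}"
proof -
  let ?r = "\<lambda>i. card (outranking z i)"
  have "?r i < CARD('d)" for i
    using psubset_card_mono[OF finite, of "outranking z i" UNIV] by (auto simp: outranking_def)
  then have "?r ` UNIV \<subseteq> {..<CARD('d)}" by auto
  moreover have "card (?r ` UNIV) = CARD('d)"
    using card_image[OF inj_card_outranking] by blast
  ultimately show ?thesis by (simp add: card_subset_eq)
qed

lemma card_hard_thr_set_le: "card (hard_thr_set k z) \<le> k"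
proof -
  have "card (hard_thr_set k z) \<le> card {..<k}"
    by (rule card_inj_on_le[OF inj_on_subset[OF inj_card_outranking]])
      (auto simp: hard_thr_set_def)
  then show ?thesis by simp
qed

lemma card_hard_thr_set:
  fixes z :: "real ^ ('d::{finite,linorder})"
  assumes "k \<le> CARD('d)"
  shows "card (hard_thr_set k z) = k"
proof -
  have "hard_thr_set k z = (\<lambda>i. card (outranking z i)) -` {..<k}"
    by (auto simp: hard_thr_set_def)
  also have "card \<dots> = card {..<k}"
    by (rule card_vimage_inj[OF inj_card_outranking]) (use assms in \<open>auto simp: range_card_outranking\<close>)
  finally show ?thesis by simp
qed

lemma hard_thr_set_dominates:
  assumes "i \<notin> hard_thr_set k z" "j \<in> hard_thr_set k z"
  shows "\<bar>z $ i\<bar> \<le> \<bar>z $ j\<bar>"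
proof (rule ccontr)
  assume "\<not> ?thesis"
  then have "outranking z i \<subset> outranking z j"
    by (intro outranking_psubset) (simp add: outranking_def)
  then have "card (outranking z i) < card (outranking z j)"
    by (simp add: psubset_card_mono)
  then show False
    using assms by (simp add: hard_thr_set_def)
qed

definition vec_support :: "real ^ 'd \<Rightarrow> 'd set" where
  "vec_support v = {i. v $ i \<noteq> 0}"

lemma l0_eq_card_vec_support: "l0 v = card (vec_support v)"
  by (simp add: l0_def vec_support_def)

lemma l0_le_card: "vec_support v \<subseteq> \<Omega> \<Longrightarrow> l0 v \<le> card \<Omega>"
  unfolding l0_eq_card_vec_support by (rule card_mono) auto

lemma vec_support_add: "vec_support (u + v) \<subseteq> vec_support u \<union> vec_support v"
  by (auto simp: vec_support_def)

lemma vec_support_diff: "vec_support (u - v) \<subseteq> vec_support u \<union> vec_support v"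
  by (auto simp: vec_support_def)

lemma vec_support_scaleR: "vec_support (c *\<^sub>R v) \<subseteq> vec_support v"
  by (auto simp: vec_support_def)

lemma power2_norm_vec: "(norm (v :: real ^ 'd))\<^sup>2 = (\<Sum>i\<in>UNIV. (v $ i)\<^sup>2)"
  by (simp add: norm_vec_def L2_set_def sum_nonneg)

definition restrict_vec :: "'d set \<Rightarrow> real ^ 'd \<Rightarrow> real ^ 'd" where
  "restrict_vec \<Omega> v = (\<chi> i. if i \<in> \<Omega> then v $ i else 0)"

lemma restrict_vec_add: "restrict_vec \<Omega> (u + v) = restrict_vec \<Omega> u + restrict_vec \<Omega> v"
  by (simp add: restrict_vec_def vec_eq_iff)

lemma vec_support_restrict_vec: "vec_support (restrict_vec \<Omega> v) \<subseteq> \<Omega>"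
  by (auto simp: restrict_vec_def vec_support_def)

lemma power2_norm_restrict_vec: "(norm (restrict_vec \<Omega> v))\<^sup>2 = (\<Sum>i\<in>\<Omega>. (v $ i)\<^sup>2)"
proof -
  have "(norm (restrict_vec \<Omega> v))\<^sup>2 = (\<Sum>i\<in>UNIV. if i \<in> \<Omega> then (v $ i)\<^sup>2 else 0)"
    unfolding power2_norm_vec restrict_vec_def by (intro sum.cong) auto
  also have "\<dots> = (\<Sum>i\<in>\<Omega>. (v $ i)\<^sup>2)" by (simp add: sum.If_cases)
  finally show ?thesis .
qed

lemma inner_restrict_vec: "restrict_vec \<Omega> v \<bullet> v = (norm (restrict_vec \<Omega> v))\<^sup>2"
proof -
  have "restrict_vec \<Omega> v \<bullet> v = restrict_vec \<Omega> v \<bullet> restrict_vec \<Omega> v"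
    unfolding inner_vec_def by (intro sum.cong) (auto simp: restrict_vec_def)
  then show ?thesis by (simp add: power2_norm_eq_inner)
qed

lemma le_of_power2_le_mult:
  fixes a b :: real
  assumes "a\<^sup>2 \<le> a * b" "0 \<le> b"
  shows "a \<le> b"
  using assms by (cases "a > 0") (auto simp: power2_eq_square)

section \<open>The restricted isometry constant\<close>

definition ric_set :: "real ^ 'd ^ 'n \<Rightarrow> nat \<Rightarrow> real set" where
  "ric_set A r = {\<delta>. \<delta> \<ge> 0 \<and> (\<forall>x. l0 x \<le> r \<longrightarrow>
        (1 - \<delta>) * (norm x)\<^sup>2 \<le> (norm (A *v x))\<^sup>2 \<and> (norm (A *v x))\<^sup>2 \<le> (1 + \<delta>) * (norm x)\<^sup>2)}"

lemma ric_eq_Inf: "ric A r = Inf (ric_set A r)"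
  unfolding ric_def ric_set_def ..

text \<open>Nonemptiness is what makes ric an honest infimum; Inf of the empty set is a junk value.\<close>

lemma ric_set_nonempty: "ric_set (A :: real ^ 'd ^ 'n) r \<noteq> {}"
proof -
  obtain C where C: "\<And>x. norm (A *v x) \<le> norm x * C"
    using bounded_linear.pos_bounded[OF matrix_vector_mul_bounded_linear] by blast
  have "(norm (A *v x))\<^sup>2 \<le> (1 + (C\<^sup>2 + 1)) * (norm x)\<^sup>2" for x :: "real ^ 'd"
  proof -
    have "(norm (A *v x))\<^sup>2 \<le> (norm x * C)\<^sup>2" using C[of x] by (simp add: power_mono)
    also have "\<dots> \<le> (1 + (C\<^sup>2 + 1)) * (norm x)\<^sup>2" by (simp add: power_mult_distrib algebra_simps)
    finally show ?thesis .
  qed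
  moreover have "(1 - (C\<^sup>2 + 1)) * (norm x)\<^sup>2 \<le> (norm (A *v x))\<^sup>2" for x :: "real ^ 'd"
  proof -
    have "(1 - (C\<^sup>2 + 1)) * (norm x)\<^sup>2 = - (C\<^sup>2 * (norm x)\<^sup>2)" by simp
    also have "\<dots> \<le> 0" by simp
    finally show ?thesis by (meson order_trans zero_le_power2)
  qed
  ultimately have "C\<^sup>2 + 1 \<in> ric_set A r" unfolding ric_set_def by auto
  then show ?thesis by blast
qed

lemma ric_nonneg: "0 \<le> ric A r"
  unfolding ric_eq_Inf by (rule cInf_greatest[OF ric_set_nonempty]) (auto simp: ric_set_def)

lemma ric_bounds:
  fixes A :: "real ^ 'd ^ 'n"
  assumes "l0 x \<le> r"
  shows "(1 - ric A r) * (norm x)\<^sup>2 \<le> (norm (A *v x))\<^sup>2 \<and> (norm (A *v x))\<^sup>2 \<le> (1 + ric A r) * (norm x)\<^sup>2"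
proof (cases "x = 0")
  case False
  define n a where "n = (norm x)\<^sup>2" and "a = (norm (A *v x))\<^sup>2"
  have "0 < n" using False n_def by simp
  have "(n - a) / n \<le> ric A r"
    unfolding ric_eq_Inf
  proof (rule cInf_greatest[OF ric_set_nonempty])
    fix \<delta> assume "\<delta> \<in> ric_set A r"
    then have "(1 - \<delta>) * n \<le> a" using assms unfolding ric_set_def n_def a_def by blast
    then show "(n - a) / n \<le> \<delta>" using \<open>0 < n\<close> by (simp add: field_simps)
  qed
  moreover have "(a - n) / n \<le> ric A r"
    unfolding ric_eq_Inf
  proof (rule cInf_greatest[OF ric_set_nonempty])
    fix \<delta> assume "\<delta> \<in> ric_set A r"
    then have "a \<le> (1 + \<delta>) * n" using assms unfolding ric_set_def n_def a_def by blast
    then show "(a - n) / n \<le> \<delta>" using \<open>0 < n\<close> by (simp add: field_simps)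
  qed
  ultimately show ?thesis
    unfolding n_def[symmetric] a_def[symmetric] using \<open>0 < n\<close> by (simp add: field_simps)
qed simp

lemma ric_inner_polar:
  fixes A :: "real ^ 'd ^ 'n" and u v :: "real ^ 'd"
  assumes "vec_support u \<subseteq> \<Omega>" "vec_support v \<subseteq> \<Omega>" "card \<Omega> \<le> r"
  shows "\<bar>(A *v u) \<bullet> (A *v v) - u \<bullet> v\<bar> \<le> ric A r * ((norm u)\<^sup>2 + (norm v)\<^sup>2) / 2"
proof -
  have "vec_support (u + v) \<subseteq> \<Omega>" "vec_support (u - v) \<subseteq> \<Omega>"
    using vec_support_add[of u v] vec_support_diff[of u v] assms(1,2) by blast+
  then have "l0 (u + v) \<le> r" "l0 (u - v) \<le> r"
    using assms(3) by (meson l0_le_card le_trans)+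
  from this[THEN ric_bounds[where A = A]]
  show ?thesis
    by (simp add: matrix_vector_right_distrib matrix_vector_mult_diff_distrib power2_norm_eq_inner
        inner_add_left inner_add_right inner_diff_left inner_diff_right inner_commute algebra_simps)
      (simp add: abs_if; linarith)
qed

lemma ric_inner_bound:
  fixes A :: "real ^ 'd ^ 'n" and u v :: "real ^ 'd"
  assumes "vec_support u \<subseteq> \<Omega>" "vec_support v \<subseteq> \<Omega>" "card \<Omega> \<le> r"
  shows "\<bar>(A *v u) \<bullet> (A *v v) - u \<bullet> v\<bar> \<le> ric A r * norm u * norm v"
proof (cases "u = 0 \<or> v = 0")
  case False
  define a b where ab: "a = norm u" "b = norm v"
  have "0 < a" "0 < b" using False ab by auto
  have "vec_support ((1/a) *\<^sub>R u) \<subseteq> \<Omega>" "vec_support ((1/b) *\<^sub>R v) \<subseteq> \<Omega>"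
    using assms vec_support_scaleR by blast+
  from ric_inner_polar[OF this assms(3), of A]
  have "\<bar>((A *v u) \<bullet> (A *v v) - u \<bullet> v) / (a * b)\<bar> \<le> ric A r"
    using \<open>0 < a\<close> \<open>0 < b\<close>
    by (simp add: ab matrix_vector_mult_scaleR diff_divide_distrib mult.commute)
  then show ?thesis
    using \<open>0 < a\<close> \<open>0 < b\<close> by (simp add: ab abs_mult field_simps)
qed auto

section \<open>A tight bound for hard thresholding\<close>

lemma iht_rho_nonneg: "K \<le> k \<Longrightarrow> 0 \<le> iht_rho d k K"
  unfolding iht_rho_def by (auto intro!: divide_nonneg_nonneg)

lemma iht_nu_ge_1: "0 \<le> iht_rho d k K \<Longrightarrow> 1 \<le> iht_nu d k K"
  unfolding iht_nu_def by simp

lemma iht_nu_gt_1: "0 < iht_rho d k K \<Longrightarrow> 1 < iht_nu d k K"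
  unfolding iht_nu_def by (simp add: add_pos_nonneg)

lemma iht_nu_minus_1_sq:
  assumes "0 \<le> iht_rho d k K"
  shows "(iht_nu d k K - 1)\<^sup>2 = iht_rho d k K * iht_nu d k K"
proof -
  define r where "r = iht_rho d k K"
  have "(sqrt ((4 + r) * r))\<^sup>2 = (4 + r) * r" using assms r_def by simp
  then show ?thesis
    unfolding iht_nu_def r_def[symmetric] by (simp add: power2_eq_square field_simps)
qed

text \<open>
  |T - S| is at most min K (d - k), while |S - T| = k - |S \<inter> T| is at least k - K + |T - S|.
\<close>

lemma card_diff_le_iht_rho:
  fixes S T :: "'a::finite set"
  assumes "card S = k" "card T \<le> K" "K \<le> k" "k \<le> CARD('a)"
  shows "real (card (T - S)) \<le> iht_rho CARD('a) k K * real (card (S - T))"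
proof (cases "T - S = {}")
  case True
  then show ?thesis by (simp only: True card.empty of_nat_0) (simp add: iht_rho_nonneg assms(3))
next
  case False
  define m p M where "m = card (T - S)" and "p = card (S - T)" and "M = min K (CARD('a) - k)"
  have "0 < m" using False by (simp add: m_def card_gt_0_iff)
  have "card T = card (S \<inter> T) + m" "card S = card (S \<inter> T) + p"
    unfolding m_def p_def by (metis Int_commute card_Int_Diff finite)+
  moreover have "m \<le> card (UNIV - S)" unfolding m_def by (rule card_mono) auto
  ultimately have "m \<le> M" "k + m \<le> p + K"
    using assms by (auto simp: M_def card_Diff_subset)
  have D: "0 < real k - real K + real M" using \<open>m \<le> M\<close> \<open>0 < m\<close> assms(3) by simp
  have "real m * (real k - real K) \<le> real M * (real k - real K)"
    using \<open>m \<le> M\<close> assms(3) by (intro mult_right_mono) auto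
  moreover have "real M * (real k - real K + real m) \<le> real M * real p"
    using \<open>k + m \<le> p + K\<close> by (intro mult_left_mono) auto
  ultimately have "real m * (real k - real K + real M) \<le> real M * real p"
    by (simp add: algebra_simps)
  then have "real m \<le> real M * real p / (real k - real K + real M)"
    using D by (simp add: pos_le_divide_eq)
  then show ?thesis
    unfolding iht_rho_def M_def[symmetric] m_def[symmetric] p_def[symmetric] by simp
qed

lemma power2_diff_le_conjugate_weights:
  fixes a b \<nu> :: real
  assumes "1 < \<nu>"
  shows "(b - a)\<^sup>2 \<le> \<nu> * a\<^sup>2 + \<nu> / (\<nu> - 1) * b\<^sup>2"
proof -
  have "0 \<le> ((\<nu> - 1) * a + b)\<^sup>2 / (\<nu> - 1)" using assms by simp
  then show ?thesis using assms by (simp add: power2_eq_square field_simps)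
qed

lemma sum_le_mult_sum_dominating:
  fixes f :: "'a \<Rightarrow> real"
  assumes "finite U" "finite P"
    and "\<And>i j. i \<in> U \<Longrightarrow> j \<in> P \<Longrightarrow> f i \<le> f j" "\<And>j. j \<in> P \<Longrightarrow> 0 \<le> f j"
    and "real (card U) \<le> c * real (card P)"
  shows "sum f U \<le> c * sum f P"
proof (cases "P = {}")
  case True
  then show ?thesis using assms(1,5) by simp
next
  case False
  have "real (card P) * sum f U = (\<Sum>i\<in>U. \<Sum>j\<in>P. f i)"
    by (simp add: sum_distrib_right mult.commute)
  also have "\<dots> \<le> (\<Sum>i\<in>U. \<Sum>j\<in>P. f j)" by (intro sum_mono) (simp add: assms(3))
  also have "\<dots> = real (card U) * sum f P" by simp
  also have "\<dots> \<le> real (card P) * (c * sum f P)"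
    using mult_right_mono[OF assms(5) sum_nonneg[of P f]] assms(4) by (simp add: mult_ac)
  finally show ?thesis
    using False assms(2) by (simp add: card_gt_0_iff)
qed

lemma power2_norm_hard_thr_diff:
  fixes z x :: "real ^ ('d::{finite,linorder})" and k :: nat
  defines "S \<equiv> hard_thr_set k z"
  shows "(norm (hard_thr k z - x))\<^sup>2
    = (\<Sum>i\<in>vec_support x - S. (x $ i)\<^sup>2) + (\<Sum>i\<in>S. (z $ i - x $ i)\<^sup>2)"
proof -
  have "(norm (hard_thr k z - x))\<^sup>2
      = (\<Sum>i\<in>UNIV - S. (hard_thr k z $ i - x $ i)\<^sup>2) + (\<Sum>i\<in>S. (hard_thr k z $ i - x $ i)\<^sup>2)"
    unfolding power2_norm_vec vector_minus_component by (rule sum.subset_diff) auto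
  also have "(\<Sum>i\<in>UNIV - S. (hard_thr k z $ i - x $ i)\<^sup>2) = (\<Sum>i\<in>UNIV - S. (x $ i)\<^sup>2)"
    by (intro sum.cong) (auto simp: hard_thr_nth S_def)
  also have "\<dots> = (\<Sum>i\<in>vec_support x - S. (x $ i)\<^sup>2)"
    by (intro sum.mono_neutral_right) (auto simp: vec_support_def)
  also have "(\<Sum>i\<in>S. (hard_thr k z $ i - x $ i)\<^sup>2) = (\<Sum>i\<in>S. (z $ i - x $ i)\<^sup>2)"
    by (intro sum.cong) (auto simp: hard_thr_nth S_def)
  finally show ?thesis .
qed

lemma hard_thr_missed_mass_bound:
  fixes z x :: "real ^ ('d::{finite,linorder})"
  assumes "l0 x \<le> K" "K \<le> k" "k \<le> CARD('d)"
  defines "S \<equiv> hard_thr_set k z" and "T \<equiv> vec_support x" and "\<nu> \<equiv> iht_nu CARD('d) k K"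
  shows "(\<Sum>i\<in>T - S. (x $ i)\<^sup>2)
    \<le> (\<nu> - 1) * (\<Sum>i\<in>S. (z $ i - x $ i)\<^sup>2) + \<nu> * (\<Sum>i\<in>T - S. (z $ i - x $ i)\<^sup>2)"
proof (cases "T - S = {}")
  case True
  have "1 \<le> \<nu>" unfolding \<nu>_def by (intro iht_nu_ge_1 iht_rho_nonneg assms(2))
  then show ?thesis unfolding True by (simp add: sum_nonneg)
next
  case False
  define \<rho> where "\<rho> = iht_rho CARD('d) k K"
  have count: "real (card (T - S)) \<le> \<rho> * real (card (S - T))"
    using card_diff_le_iht_rho[OF card_hard_thr_set[OF assms(3)] _ assms(2,3)] assms(1)
    by (simp add: \<rho>_def S_def T_def l0_eq_card_vec_support)
  moreover have "0 < real (card (T - S))" using False by (simp add: card_gt_0_iff)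
  ultimately have "0 < \<rho> * real (card (S - T))" by linarith
  then have "0 < \<rho>" by (simp add: zero_less_mult_iff)
  then have "1 < \<nu>" by (simp add: \<nu>_def \<rho>_def iht_nu_gt_1)
  \<comment> \<open>(nu - 1)^2 = rho nu makes the Young weight nu / (nu - 1) absorb the counting factor rho\<close>
  have weight: "\<nu> / (\<nu> - 1) * \<rho> = \<nu> - 1"
    using iht_nu_minus_1_sq[of "CARD('d)" k K] \<open>0 < \<rho>\<close> \<open>1 < \<nu>\<close>
    by (simp add: \<nu>_def \<rho>_def field_simps power2_eq_square)
  have "(\<Sum>i\<in>T - S. (z $ i)\<^sup>2) \<le> \<rho> * (\<Sum>i\<in>S - T. (z $ i)\<^sup>2)"
    using count by (intro sum_le_mult_sum_dominating)
      (auto simp: S_def abs_le_square_iff[symmetric] intro: hard_thr_set_dominates)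
  also have "(\<Sum>i\<in>S - T. (z $ i)\<^sup>2) = (\<Sum>i\<in>S - T. (z $ i - x $ i)\<^sup>2)"
    by (intro sum.cong) (auto simp: T_def vec_support_def)
  also have "\<rho> * \<dots> \<le> \<rho> * (\<Sum>i\<in>S. (z $ i - x $ i)\<^sup>2)"
    using \<open>0 < \<rho>\<close> by (intro mult_left_mono sum_mono2) auto
  finally have "\<nu> / (\<nu> - 1) * (\<Sum>i\<in>T - S. (z $ i)\<^sup>2)
      \<le> \<nu> / (\<nu> - 1) * (\<rho> * (\<Sum>i\<in>S. (z $ i - x $ i)\<^sup>2))"
    using \<open>1 < \<nu>\<close> by (intro mult_left_mono) auto
  also have "\<dots> = (\<nu> - 1) * (\<Sum>i\<in>S. (z $ i - x $ i)\<^sup>2)"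
    by (simp only: mult.assoc[symmetric] weight)
  moreover
  have "(\<Sum>i\<in>T - S. (x $ i)\<^sup>2)
      \<le> \<nu> * (\<Sum>i\<in>T - S. (z $ i - x $ i)\<^sup>2) + \<nu> / (\<nu> - 1) * (\<Sum>i\<in>T - S. (z $ i)\<^sup>2)"
  proof -
    have "(\<Sum>i\<in>T - S. (x $ i)\<^sup>2) \<le> (\<Sum>i\<in>T - S. \<nu> * (z $ i - x $ i)\<^sup>2 + \<nu> / (\<nu> - 1) * (z $ i)\<^sup>2)"
      using power2_diff_le_conjugate_weights[OF \<open>1 < \<nu>\<close>, where a = "z $ i - x $ i" and b = "z $ i" for i]
      by (intro sum_mono) simp
    then show ?thesis by (simp add: sum.distrib sum_distrib_left)
  qed
  ultimately show ?thesis by linarith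
qed

lemma hard_thr_tight_bound:
  fixes z x :: "real ^ ('d::{finite,linorder})"
  assumes "l0 x \<le> K" "K \<le> k" "k \<le> CARD('d)"
  shows "(norm (hard_thr k z - x))\<^sup>2
    \<le> iht_nu CARD('d) k K * (\<Sum>i\<in>hard_thr_set k z \<union> vec_support x. (z $ i - x $ i)\<^sup>2)"
proof -
  define S T where "S = hard_thr_set k z" and "T = vec_support x"
  have "(\<Sum>i\<in>S \<union> T. (z $ i - x $ i)\<^sup>2)
      = (\<Sum>i\<in>S. (z $ i - x $ i)\<^sup>2) + (\<Sum>i\<in>T - S. (z $ i - x $ i)\<^sup>2)"
    using sum.union_disjoint[of S "T - S" "\<lambda>i. (z $ i - x $ i)\<^sup>2"] by (simp add: Un_Diff_cancel)
  then show ?thesis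
    using power2_norm_hard_thr_diff[of k z x] hard_thr_missed_mass_bound[OF assms, of z]
    unfolding S_def[symmetric] T_def[symmetric] by (simp add: algebra_simps)
qed

section \<open>One step of iterative hard thresholding\<close>

lemma norm_restrict_gram_residual_le:
  fixes A :: "real ^ 'd ^ 'n"
  assumes "vec_support e \<subseteq> \<Omega>" "card \<Omega> \<le> r"
  shows "norm (restrict_vec \<Omega> (e - transpose A *v (A *v e))) \<le> ric A r * norm e"
proof -
  define w where "w = restrict_vec \<Omega> (e - transpose A *v (A *v e))"
  have "(norm w)\<^sup>2 = w \<bullet> e - (A *v w) \<bullet> (A *v e)"
    using inner_restrict_vec[of \<Omega> "e - transpose A *v (A *v e)"]
    by (simp add: w_def inner_diff_left inner_diff_right dot_lmul_matrix inner_commute)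
  also have "\<dots> \<le> \<bar>(A *v w) \<bullet> (A *v e) - w \<bullet> e\<bar>" by simp
  also have "\<dots> \<le> norm w * (ric A r * norm e)"
    using ric_inner_bound[OF _ assms, of w A] vec_support_restrict_vec[of \<Omega>]
    by (simp add: w_def mult_ac)
  finally show ?thesis
    unfolding w_def[symmetric] by (rule le_of_power2_le_mult) (simp add: ric_nonneg)
qed

lemma norm_restrict_adjoint_le:
  fixes A :: "real ^ 'd ^ 'n"
  assumes "card \<Omega> \<le> r"
  shows "norm (restrict_vec \<Omega> (transpose A *v \<epsilon>)) \<le> sqrt (1 + ric A r) * norm \<epsilon>"
proof -
  define g where "g = restrict_vec \<Omega> (transpose A *v \<epsilon>)"
  have "l0 g \<le> r"
    using l0_le_card[OF vec_support_restrict_vec] assms unfolding g_def by (rule le_trans)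
  then have "(norm (A *v g))\<^sup>2 \<le> (1 + ric A r) * (norm g)\<^sup>2" by (simp add: ric_bounds)
  then have Ag: "norm (A *v g) \<le> sqrt (1 + ric A r) * norm g"
    using real_sqrt_le_mono by (fastforce simp: real_sqrt_mult)
  have "(norm g)\<^sup>2 = \<epsilon> \<bullet> (A *v g)"
    using inner_restrict_vec[of \<Omega> "transpose A *v \<epsilon>"]
    by (simp add: g_def dot_lmul_matrix inner_commute)
  also have "\<dots> \<le> norm \<epsilon> * norm (A *v g)" by (rule norm_cauchy_schwarz)
  also have "\<dots> \<le> norm \<epsilon> * (sqrt (1 + ric A r) * norm g)"
    using Ag by (rule mult_left_mono) simp
  also have "\<dots> = norm g * (sqrt (1 + ric A r) * norm \<epsilon>)" by (simp add: mult_ac)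
  finally show ?thesis
    unfolding g_def[symmetric] by (rule le_of_power2_le_mult) (simp add: ric_nonneg)
qed

lemma l0_hard_thr_le: "l0 (hard_thr k z) \<le> k"
proof -
  have "vec_support (hard_thr k z) \<subseteq> hard_thr_set k z"
    by (auto simp: vec_support_def hard_thr_nth)
  then show ?thesis using l0_le_card card_hard_thr_set_le le_trans by blast
qed

lemma hard_thr_error_le_restrict:
  fixes z xs :: "real ^ ('d::{finite,linorder})"
  assumes "l0 xs \<le> K" "K \<le> k" "k \<le> CARD('d)"
    and "hard_thr_set k z \<union> vec_support xs \<subseteq> \<Omega>"
  shows "norm (hard_thr k z - xs) \<le> sqrt (iht_nu CARD('d) k K) * norm (restrict_vec \<Omega> (z - xs))"
proof -
  define \<nu> where "\<nu> = iht_nu CARD('d) k K"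
  have "1 \<le> \<nu>" unfolding \<nu>_def by (intro iht_nu_ge_1 iht_rho_nonneg assms(2))
  have "(norm (hard_thr k z - xs))\<^sup>2
      \<le> \<nu> * (\<Sum>i\<in>hard_thr_set k z \<union> vec_support xs. (z $ i - xs $ i)\<^sup>2)"
    unfolding \<nu>_def using assms(1-3) by (rule hard_thr_tight_bound)
  also have "\<dots> \<le> \<nu> * (\<Sum>i\<in>\<Omega>. (z $ i - xs $ i)\<^sup>2)"
    using \<open>1 \<le> \<nu>\<close> assms(4) by (intro mult_left_mono sum_mono2) auto
  also have "\<dots> = (sqrt \<nu> * norm (restrict_vec \<Omega> (z - xs)))\<^sup>2"
    using \<open>1 \<le> \<nu>\<close> by (simp add: power2_norm_restrict_vec power_mult_distrib)
  finally show ?thesis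
    unfolding \<nu>_def[symmetric] by (rule power2_le_imp_le) (use \<open>1 \<le> \<nu>\<close> in simp)
qed

lemma norm_restrict_gradient_step_error_le:
  fixes A :: "real ^ 'd ^ 'n" and x xs :: "real ^ 'd"
  assumes "vec_support (x - xs) \<subseteq> \<Omega>" "card \<Omega> \<le> r"
  shows "norm (restrict_vec \<Omega> (x + transpose A *v (A *v xs + \<epsilon> - A *v x) - xs))
    \<le> ric A r * norm (x - xs) + sqrt (1 + ric A r) * norm \<epsilon>"
proof -
  define e where "e = x - xs"
  have eq: "x + transpose A *v (A *v xs + \<epsilon> - A *v x) - xs
      = (e - transpose A *v (A *v e)) + transpose A *v \<epsilon>"
    unfolding e_def
    by (simp add: matrix_vector_right_distrib matrix_vector_mult_diff_distrib algebra_simps)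
  have "norm (restrict_vec \<Omega> (e - transpose A *v (A *v e)) + restrict_vec \<Omega> (transpose A *v \<epsilon>))
      \<le> ric A r * norm e + sqrt (1 + ric A r) * norm \<epsilon>"
    using norm_restrict_gram_residual_le[OF assms[folded e_def], of A]
      norm_restrict_adjoint_le[OF assms(2), of A \<epsilon>]
    by (rule order_trans[OF norm_triangle_ineq add_mono])
  then show ?thesis unfolding eq e_def[symmetric] restrict_vec_add .
qed

lemma sqrt_mult_le_half:
  fixes \<nu> \<delta> :: real
  assumes "0 < \<nu>" "\<delta> \<le> 1 / sqrt (8 * \<nu>)"
  shows "sqrt \<nu> * \<delta> \<le> 1/2"
proof -
  have "sqrt \<nu> * \<delta> \<le> sqrt \<nu> * (1 / sqrt (8 * \<nu>))"
    using assms by (intro mult_left_mono) simp_all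
  also have "\<dots> = 1 / sqrt 8"
    using assms(1) by (simp add: real_sqrt_mult)
  also have "\<dots> \<le> 1/2"
    using real_le_rsqrt[of 2 8] by (simp add: divide_simps)
  finally show ?thesis .
qed

lemma iht_step_bound:
  fixes A :: "real ^ ('d::{finite,linorder}) ^ ('n::finite)" and xs x :: "real ^ ('d::{finite,linorder})"
  assumes "l0 xs = K" "K \<le> k" "k \<le> CARD('d)" "l0 x \<le> k"
    and ric: "ric A (2 * k + K) \<le> 1 / sqrt (8 * iht_nu CARD('d) k K)"
  shows "norm (hard_thr k (x + transpose A *v (A *v xs + \<epsilon> - A *v x)) - xs)
    \<le> 1/2 * norm (x - xs) + sqrt (iht_nu CARD('d) k K * (1 + ric A (2 * k + K))) * norm \<epsilon>"
proof -
  define \<delta> \<nu> where "\<delta> = ric A (2 * k + K)" and "\<nu> = iht_nu CARD('d) k K"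
  define z where "z = x + transpose A *v (A *v xs + \<epsilon> - A *v x)"
  define \<Omega> where "\<Omega> = vec_support x \<union> vec_support xs \<union> hard_thr_set k z"
  have "1 \<le> \<nu>" unfolding \<nu>_def by (intro iht_nu_ge_1 iht_rho_nonneg assms(2))
  have "card \<Omega> \<le> 2 * k + K"
    using card_Un_le[of "vec_support x \<union> vec_support xs" "hard_thr_set k z"]
      card_Un_le[of "vec_support x" "vec_support xs"] card_hard_thr_set_le[of k z] assms(1,4)
    unfolding \<Omega>_def l0_eq_card_vec_support by linarith
  have "vec_support (x - xs) \<subseteq> \<Omega>"
    using vec_support_diff[of x xs] unfolding \<Omega>_def by blast
  have "norm (hard_thr k z - xs) \<le> sqrt \<nu> * norm (restrict_vec \<Omega> (z - xs))"
    unfolding \<nu>_def by (rule hard_thr_error_le_restrict) (use assms in \<open>auto simp: \<Omega>_def\<close>)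
  also have "\<dots> \<le> sqrt \<nu> * (\<delta> * norm (x - xs) + sqrt (1 + \<delta>) * norm \<epsilon>)"
    unfolding z_def \<delta>_def
    using norm_restrict_gradient_step_error_le[OF \<open>vec_support (x - xs) \<subseteq> \<Omega>\<close> \<open>card \<Omega> \<le> 2 * k + K\<close>]
    by (rule mult_left_mono) (use \<open>1 \<le> \<nu>\<close> in simp)
  also have "\<dots> = sqrt \<nu> * \<delta> * norm (x - xs) + sqrt (\<nu> * (1 + \<delta>)) * norm \<epsilon>"
    by (simp only: real_sqrt_mult) (simp add: distrib_left mult.assoc)
  also have "\<dots> \<le> 1/2 * norm (x - xs) + sqrt (\<nu> * (1 + \<delta>)) * norm \<epsilon>"
    using sqrt_mult_le_half[of \<nu> \<delta>] ric \<open>1 \<le> \<nu>\<close> unfolding \<delta>_def \<nu>_def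
    by (intro add_right_mono mult_right_mono) auto
  finally show ?thesis by (simp add: z_def \<delta>_def \<nu>_def)
qed

lemma linear_recurrence_bound:
  fixes a :: "nat \<Rightarrow> real"
  assumes step: "\<And>t. a (Suc t) \<le> q * a t + c" and "0 \<le> q" "q < 1" "0 \<le> c"
  shows "a t \<le> q ^ t * a 0 + c / (1 - q)"
proof (induction t)
  case 0
  show ?case using assms(3,4) by simp
next
  case (Suc t)
  have "a (Suc t) \<le> q * (q ^ t * a 0 + c / (1 - q)) + c"
    using step[of t] mult_left_mono[OF Suc.IH \<open>0 \<le> q\<close>] by linarith
  also have "\<dots> = q ^ Suc t * a 0 + c / (1 - q)"
    using assms(3) by (simp add: field_simps)
  finally show ?case .
qed

theorem theorem2:
  fixes A :: "real ^ ('d::{finite,linorder}) ^ ('n::finite)"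
    and xs :: "real ^ ('d::{finite,linorder})" and eps :: "real ^ 'n" and y :: "real ^ 'n"
    and k K :: nat and x :: "nat \<Rightarrow> real ^ ('d::{finite,linorder})"
  assumes "K = l0 xs"
    and "y = A *v xs + eps"
    and "K \<le> k" and "k \<le> CARD('d::{finite,linorder})"
    and "l0 (x 0) \<le> k"
    and "\<And>t. x (Suc t) = hard_thr k (x t + transpose A *v (y - A *v x t))"
    and "ric A (2 * k + K) \<le> 1 / sqrt (8 * iht_nu CARD('d::{finite,linorder}) k K)"
  shows "(\<forall>t. norm (x (Suc t) - xs) \<le> 1/2 * norm (x t - xs)
              + sqrt (iht_nu CARD('d::{finite,linorder}) k K * (1 + ric A (2 * k + K))) * norm eps)
       \<and> (\<forall>t. norm (x t - xs) \<le> (1/2) ^ t * norm (x 0 - xs)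
              + 2 * sqrt (iht_nu CARD('d::{finite,linorder}) k K * (1 + ric A (2 * k + K))) * norm eps)"
proof -
  define c where "c = sqrt (iht_nu CARD('d) k K * (1 + ric A (2 * k + K))) * norm eps"
  have "0 \<le> c"
    using ric_nonneg[of A "2 * k + K"] iht_nu_ge_1[OF iht_rho_nonneg[OF assms(3)], of "CARD('d)"]
    by (simp add: c_def)
  have sparse: "l0 (x t) \<le> k" for t
    by (cases t) (simp_all add: assms(5,6) l0_hard_thr_le)
  have step: "norm (x (Suc t) - xs) \<le> 1/2 * norm (x t - xs) + c" for t
    unfolding assms(6) assms(2) c_def
    by (rule iht_step_bound[OF assms(1)[symmetric] assms(3,4) sparse assms(7)])
  have "norm (x t - xs) \<le> (1/2) ^ t * norm (x 0 - xs) + 2 * c" for t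
    using linear_recurrence_bound[of "\<lambda>t. norm (x t - xs)", OF step] \<open>0 \<le> c\<close> by (simp add: mult.commute)
  with step show ?thesis unfolding c_def by (simp add: mult.assoc)
qed

end
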